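(* Let $S$ and $T$ be two distinct finite symmetric generating sets of the finitely generated group $G$. Then, for any action $\Phi$ of $G$ on $X$ and any Borel measure $\mu$ on $X$: (i) $\Phi$ has shadowing with respect to $S$ if and only if it has shadowing with respect to $T$. (ii) $\Phi$ is topologically stable with respect to $S$ if and only if it is topologically stable with respect to $T$. (iii) $\Phi$ is persistent with respect to $S$ if and only if it is persistent with respect to $T$. (iv) $\Phi$ has $\mu$-shadowing with respect to $S$ if and only if it has $\mu$-shadowing with respect to $T$. (v) $\Phi$ is $\mu$-topologically stable with respect to $S$ if and only if it is $\mu$-topologically stable with respect to $T$. (vi) $\Phi$ is $\mu$-persistent with respect to $S$ if and only if it is $\mu$-persistent with respect to $T$.
   Context: $G$ is a finitely generated group and $(X,\mathcal{U})$ is a uniform space with uniformity $\mathcal{U}$ (whose members are called entourages). For $U,V\subset X\times X$, $U\circ V=\{(x,y)\mid \exists z,\ (x,z)\in U,(z,y)\in V\}$, and $D[x]=\{y\mid (x,y)\in D\}$. An action of $G$ on $X$ is a map $\Phi:G\times X\to X$ such that each $\Phi_g=\Phi(g,\cdot)$ is a uniform equivalence, $\Phi_e=\mathrm{id}$, and $\Phi_{g_1g_2}=\Phi_{g_1}\circ\Phi_{g_2}$; $Act(G,X)$ denotes the set of such actions. Generating sets are finite and symmetric. For a generating set $S$ and $D\in\mathcal{U}$: $\{x_g\}_{g\in G}$ is a $D$-pseudo orbit (w.r.t. $S$) if $(x_{sg},\Phi_s(x_g))\in D$ for all $s\in S$, $g\in G$; it is $E$-shadowed by $x$ if $(x_g,\Phi_g(x))\in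 E$ for all $g\in G$; it is through a set $B$ if $x_e\in B$. With respect to $S$: - $\Phi$ has shadowing if for every $E\in\mathcal{U}$ there is $D\in\mathcal{U}$ such that every $D$-pseudo orbit is $E$-shadowed by some point. - $\Phi$ is topologically stable if for every $E\in\mathcal{U}$ there is $D\in\mathcal{U}$ such that whenever $\Psi\in Act(G,X)$ satisfies $(\Psi_s(x),\Phi_s(x))\in D$ for all $x\in X$, $s\in S$, there is a continuous $f:X\to X$ with $\Phi_g\circ f=f\circ\Psi_g$ for all $g$ and $(x,f(x))\in E$ for all $x$. - $\Phi$ is persistent if for every $E$ there is $D$ such that for every such $\Psi$ and every $x\in X$ there is $y$ with $(\Psi_g(x),\Phi_g(y))\in E$ for all $g\in G$. - $\Phi$ has $\mu$-shadowing if for every $E$ there are $D$ and a measurable $B$ with $\mu(X\setminus B)=0$ such that every $D$-pseudo orbit through $B$ is $E$-shadowed by some point. - $\Phi$ is $\mu$-topologically stable if for every $E$ there is $D$ such that for every such $\Psi$ there is an upper semi-continuous compact-valued set-valued map $H:X\to\mathcal{P}(X)$ with measurable domain $Dom(H)=\{x\mid H(x)\neq\emptyset\}$ satisfying $\mu(X\setminus Dom(H))=0$, $\mu(H(x))=0$ for all $x$, $H(x)\subset E[x]$ for all $x$, and $\Phi_g\circ H=H\circ\Psi_g$ for all $g\in G$. ($H$ is upper semi-continuous if for every $x\in Dom(H)$ and open $O\supset H(x)$ there is $D'\in\mathcal{U}$ with $H(y)\subset O$ whenever $(x,y)\in D'$.) - $\Phi$ is $\mu$-persistent if for every $E$ there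 are $D$ and a measurable $B$ with $\mu(X\setminus B)=0$ such that for every such $\Psi$ and every $x\in B$ there is $y$ with $(\Psi_g(x),\Phi_g(y))\in E$ for all $g\in G$. *)

theory Defs
  imports "HOL-Analysis.Analysis" "HOL-Algebra.Generated_Groups"
begin

(* X is the whole type 'a of class uniform_space; its uniformity is the filter
   uniformity, and the entourages are the members of that filter. *)
definition entourage :: "('a::uniform_space \<times> 'a) set \<Rightarrow> bool" where
  "entourage E \<longleftrightarrow> eventually (\<lambda>p. p \<in> E) uniformity"

definition uniform_equivalence :: "('a::uniform_space \<Rightarrow> 'a) \<Rightarrow> bool" where
  "uniform_equivalence f \<longleftrightarrow> bij f \<and> uniformly_continuous_on UNIV f
      \<and> uniformly_continuous_on UNIV (inv_into UNIV f)"

definition is_action :: "('g, 'b) monoid_scheme \<Rightarrow> ('g \<Rightarrow> 'a::uniform_space \<Rightarrow> 'a) \<Rightarrow> bool" where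
  "is_action G \<Phi> \<longleftrightarrow> (\<forall>g\<in>carrier G. uniform_equivalence (\<Phi> g))
     \<and> \<Phi> \<one>\<^bsub>G\<^esub> = id
     \<and> (\<forall>g1\<in>carrier G. \<forall>g2\<in>carrier G. \<Phi> (g1 \<otimes>\<^bsub>G\<^esub> g2) = \<Phi> g1 \<circ> \<Phi> g2)"

definition gen_set :: "('g, 'b) monoid_scheme \<Rightarrow> 'g set \<Rightarrow> bool" where
  "gen_set G S \<longleftrightarrow> finite S \<and> S \<subseteq> carrier G \<and> (\<forall>s\<in>S. inv\<^bsub>G\<^esub> s \<in> S)
     \<and> generate G S = carrier G"

definition pseudo_orbit :: "('g, 'b) monoid_scheme \<Rightarrow> 'g set \<Rightarrow> ('g \<Rightarrow> 'a \<Rightarrow> 'a)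
     \<Rightarrow> ('a \<times> 'a) set \<Rightarrow> ('g \<Rightarrow> 'a) \<Rightarrow> bool" where
  "pseudo_orbit G S \<Phi> D xs \<longleftrightarrow>
     (\<forall>s\<in>S. \<forall>g\<in>carrier G. (xs (s \<otimes>\<^bsub>G\<^esub> g), \<Phi> s (xs g)) \<in> D)"

definition shadowed :: "('g, 'b) monoid_scheme \<Rightarrow> ('g \<Rightarrow> 'a \<Rightarrow> 'a)
     \<Rightarrow> ('a \<times> 'a) set \<Rightarrow> ('g \<Rightarrow> 'a) \<Rightarrow> 'a \<Rightarrow> bool" where
  "shadowed G \<Phi> E xs x \<longleftrightarrow> (\<forall>g\<in>carrier G. (xs g, \<Phi> g x) \<in> E)"

definition close_action :: "'g set \<Rightarrow> ('g \<Rightarrow> 'a \<Rightarrow> 'a) \<Rightarrow> ('g \<Rightarrow> 'a \<Rightarrow> 'a)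
     \<Rightarrow> ('a \<times> 'a) set \<Rightarrow> bool" where
  "close_action S \<Phi> \<Psi> D \<longleftrightarrow> (\<forall>x. \<forall>s\<in>S. (\<Psi> s x, \<Phi> s x) \<in> D)"

definition has_shadowing ::
  "('g, 'b) monoid_scheme \<Rightarrow> 'g set \<Rightarrow> ('g \<Rightarrow> 'a::uniform_space \<Rightarrow> 'a) \<Rightarrow> bool" where
  "has_shadowing G S \<Phi> \<longleftrightarrow> (\<forall>E. entourage E \<longrightarrow> (\<exists>D. entourage D \<and>
     (\<forall>xs. pseudo_orbit G S \<Phi> D xs \<longrightarrow> (\<exists>x. shadowed G \<Phi> E xs x))))"

definition top_stable ::
  "('g, 'b) monoid_scheme \<Rightarrow> 'g set \<Rightarrow> ('g \<Rightarrow> 'a::uniform_space \<Rightarrow> 'a) \<Rightarrow> bool" where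
  "top_stable G S \<Phi> \<longleftrightarrow> (\<forall>E. entourage E \<longrightarrow> (\<exists>D. entourage D \<and>
     (\<forall>\<Psi>. is_action G \<Psi> \<and> close_action S \<Phi> \<Psi> D \<longrightarrow>
        (\<exists>f. continuous_on UNIV f \<and> (\<forall>g\<in>carrier G. \<Phi> g \<circ> f = f \<circ> \<Psi> g)
             \<and> (\<forall>x. (x, f x) \<in> E)))))"

definition persistent ::
  "('g, 'b) monoid_scheme \<Rightarrow> 'g set \<Rightarrow> ('g \<Rightarrow> 'a::uniform_space \<Rightarrow> 'a) \<Rightarrow> bool" where
  "persistent G S \<Phi> \<longleftrightarrow> (\<forall>E. entourage E \<longrightarrow> (\<exists>D. entourage D \<and>
     (\<forall>\<Psi>. is_action G \<Psi> \<and> close_action S \<Phi> \<Psi> D \<longrightarrow>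
        (\<forall>x. \<exists>y. \<forall>g\<in>carrier G. (\<Psi> g x, \<Phi> g y) \<in> E))))"

definition mu_shadowing ::
  "('g, 'b) monoid_scheme \<Rightarrow> 'g set \<Rightarrow> 'a measure \<Rightarrow> ('g \<Rightarrow> 'a::uniform_space \<Rightarrow> 'a) \<Rightarrow> bool" where
  "mu_shadowing G S \<mu> \<Phi> \<longleftrightarrow> (\<forall>E. entourage E \<longrightarrow> (\<exists>D B. entourage D \<and>
     B \<in> sets \<mu> \<and> emeasure \<mu> (UNIV - B) = 0 \<and>
     (\<forall>xs. pseudo_orbit G S \<Phi> D xs \<and> xs \<one>\<^bsub>G\<^esub> \<in> B \<longrightarrow> (\<exists>x. shadowed G \<Phi> E xs x))))"

definition dom_sv :: "('a \<Rightarrow> 'a set) \<Rightarrow> 'a set" where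
  "dom_sv H = {x. H x \<noteq> {}}"

definition usc :: "('a::uniform_space \<Rightarrow> 'a set) \<Rightarrow> bool" where
  "usc H \<longleftrightarrow> (\<forall>x\<in>dom_sv H. \<forall>U. open U \<and> H x \<subseteq> U \<longrightarrow>
      (\<exists>D'. entourage D' \<and> (\<forall>y. (x, y) \<in> D' \<longrightarrow> H y \<subseteq> U)))"

definition mu_top_stable ::
  "('g, 'b) monoid_scheme \<Rightarrow> 'g set \<Rightarrow> 'a measure \<Rightarrow> ('g \<Rightarrow> 'a::uniform_space \<Rightarrow> 'a) \<Rightarrow> bool" where
  "mu_top_stable G S \<mu> \<Phi> \<longleftrightarrow> (\<forall>E. entourage E \<longrightarrow> (\<exists>D. entourage D \<and>
     (\<forall>\<Psi>. is_action G \<Psi> \<and> close_action S \<Phi> \<Psi> D \<longrightarrow>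
        (\<exists>H. usc H \<and> (\<forall>x. compact (H x)) \<and> dom_sv H \<in> sets \<mu>
             \<and> emeasure \<mu> (UNIV - dom_sv H) = 0
             \<and> (\<forall>x. emeasure \<mu> (H x) = 0)
             \<and> (\<forall>x. H x \<subseteq> E `` {x})
             \<and> (\<forall>g\<in>carrier G. \<forall>x. \<Phi> g ` H x = H (\<Psi> g x))))))"

definition mu_persistent ::
  "('g, 'b) monoid_scheme \<Rightarrow> 'g set \<Rightarrow> 'a measure \<Rightarrow> ('g \<Rightarrow> 'a::uniform_space \<Rightarrow> 'a) \<Rightarrow> bool" where
  "mu_persistent G S \<mu> \<Phi> \<longleftrightarrow> (\<forall>E. entourage E \<longrightarrow> (\<exists>D B. entourage D \<and>
     B \<in> sets \<mu> \<and> emeasure \<mu> (UNIV - B) = 0 \<and>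
     (\<forall>\<Psi>. is_action G \<Psi> \<and> close_action S \<Phi> \<Psi> D \<longrightarrow>
        (\<forall>x\<in>B. \<exists>y. \<forall>g\<in>carrier G. (\<Psi> g x, \<Phi> g y) \<in> E))))"

end

theory Submission
  imports Defs
begin

text \<open>Every element of S is a word in T. For a T-pseudo orbit xs, the defect
  (xs (h1 h2 g), \<Phi> (h1 h2) (xs g)) is controlled by the defects at h1 and at h2, through an
  entourage whose square lies in the target one and the uniform continuity of \<Phi> h1. So a fine
  enough T-pseudo orbit is an S-pseudo orbit at any prescribed scale. The orbits of an action
  close to \<Phi> on T are T-pseudo orbits of \<Phi>, so the same holds for closeness of actions, and
  each of the six notions only depends on pseudo orbits or close actions below some entourage.\<close>

lemma entourage_refl: "entourage D \<Longrightarrow> (x, x) \<in> D"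
  unfolding entourage_def using uniformity_refl[of "\<lambda>p. p \<in> D"] by simp

lemma entourage_Int: "entourage A \<Longrightarrow> entourage B \<Longrightarrow> entourage (A \<inter> B)"
  unfolding entourage_def by (simp add: eventually_conj)

lemma entourage_INT_finite:
  "finite S \<Longrightarrow> (\<And>s. s \<in> S \<Longrightarrow> entourage (F s)) \<Longrightarrow> entourage (\<Inter>s\<in>S. F s)"
  unfolding entourage_def by (simp add: eventually_ball_finite)

lemma entourage_half:
  assumes "entourage D"
  obtains D' where "entourage D'" "\<And>x y z. (x, y) \<in> D' \<Longrightarrow> (y, z) \<in> D' \<Longrightarrow> (x, z) \<in> D"
proof -
  from uniformity_trans[of "\<lambda>p. p \<in> D"] assms obtain P where
    "eventually P uniformity" "\<forall>x y z. P (x, y) \<longrightarrow> P (y, z) \<longrightarrow> (x, z) \<in> D"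
    unfolding entourage_def by auto
  then show thesis
    using that[of "{p. P p}"] unfolding entourage_def by auto
qed

lemma entourage_uniformly_continuous:
  assumes "uniformly_continuous_on UNIV f" "entourage D"
  obtains D' where "entourage D'" "\<And>a b. (a, b) \<in> D' \<Longrightarrow> (f a, f b) \<in> D"
proof -
  from uniformly_continuous_onD[OF assms(1), of "\<lambda>p. p \<in> D"] assms(2)
  have "eventually (\<lambda>(x, y). (f x, f y) \<in> D) uniformity"
    unfolding entourage_def by simp
  then have "entourage {(x, y). (f x, f y) \<in> D}"
    unfolding entourage_def by (simp add: case_prod_unfold)
  then show thesis
    using that by blast
qed

lemma pseudo_orbit_mono:
  "pseudo_orbit G T \<Phi> D xs \<Longrightarrow> D \<subseteq> D' \<Longrightarrow> pseudo_orbit G T \<Phi> D' xs"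
  unfolding pseudo_orbit_def by blast

lemma pseudo_orbit_generate:
  fixes \<Phi> :: "'g \<Rightarrow> 'a::uniform_space \<Rightarrow> 'a"
  assumes G: "group G" and T: "T \<subseteq> carrier G" and T_inv: "\<And>t. t \<in> T \<Longrightarrow> inv\<^bsub>G\<^esub> t \<in> T"
    and act: "is_action G \<Phi>" and h: "h \<in> generate G T" and D: "entourage D"
  obtains D' where "entourage D'"
    "\<And>xs g. pseudo_orbit G T \<Phi> D' xs \<Longrightarrow> g \<in> carrier G \<Longrightarrow> (xs (h \<otimes>\<^bsub>G\<^esub> g), \<Phi> h (xs g)) \<in> D"
  using h D that
proof (induction h arbitrary: D thesis rule: generate.induct)
  case one
  have "\<Phi> \<one>\<^bsub>G\<^esub> = id"
    using act unfolding is_action_def by simp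
  show ?case
  proof (rule one.prems)
    show "entourage UNIV"
      by (simp add: entourage_def)
    fix xs g assume "g \<in> carrier G"
    then show "(xs (\<one>\<^bsub>G\<^esub> \<otimes>\<^bsub>G\<^esub> g), \<Phi> \<one>\<^bsub>G\<^esub> (xs g)) \<in> D"
      using \<open>\<Phi> \<one>\<^bsub>G\<^esub> = id\<close> G entourage_refl[OF \<open>entourage D\<close>]
      by (simp add: group.is_monoid)
  qed
next
  case (incl h)
  then show ?case
    unfolding pseudo_orbit_def by blast
next
  case (inv h)
  then show ?case
    using T_inv inv.prems unfolding pseudo_orbit_def by blast
next
  case (eng h1 h2)
  have h1: "h1 \<in> carrier G" and h2: "h2 \<in> carrier G"
    using eng.hyps T G by (auto dest: group.generate_incl)
  obtain D1 where D1: "entourage D1" "\<And>x y z. (x, y) \<in> D1 \<Longrightarrow> (y, z) \<in> D1 \<Longrightarrow> (x, z) \<in> D"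
    using entourage_half[OF \<open>entourage D\<close>] by blast
  obtain D2 where D2: "entourage D2" "\<And>a b. (a, b) \<in> D2 \<Longrightarrow> (\<Phi> h1 a, \<Phi> h1 b) \<in> D1"
    using act h1 entourage_uniformly_continuous[OF _ D1(1), of "\<Phi> h1"]
    unfolding is_action_def uniform_equivalence_def by blast
  obtain A where A: "entourage A"
    "\<And>xs g. pseudo_orbit G T \<Phi> A xs \<Longrightarrow> g \<in> carrier G \<Longrightarrow> (xs (h1 \<otimes>\<^bsub>G\<^esub> g), \<Phi> h1 (xs g)) \<in> D1"
    using eng.IH(1) D1(1) by blast
  obtain B where B: "entourage B"
    "\<And>xs g. pseudo_orbit G T \<Phi> B xs \<Longrightarrow> g \<in> carrier G \<Longrightarrow> (xs (h2 \<otimes>\<^bsub>G\<^esub> g), \<Phi> h2 (xs g)) \<in> D2"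
    using eng.IH(2) D2(1) by blast
  show ?case
  proof (rule eng.prems)
    show "entourage (A \<inter> B)"
      using A(1) B(1) by (rule entourage_Int)
  next
    fix xs g assume po: "pseudo_orbit G T \<Phi> (A \<inter> B) xs" and g: "g \<in> carrier G"
    have "(xs (h1 \<otimes>\<^bsub>G\<^esub> (h2 \<otimes>\<^bsub>G\<^esub> g)), \<Phi> h1 (xs (h2 \<otimes>\<^bsub>G\<^esub> g))) \<in> D1"
      using A(2)[OF pseudo_orbit_mono[OF po]] G h2 g by (simp add: group.is_monoid monoid.m_closed)
    moreover have "(\<Phi> h1 (xs (h2 \<otimes>\<^bsub>G\<^esub> g)), \<Phi> h1 (\<Phi> h2 (xs g))) \<in> D1"
      using D2(2) B(2)[OF pseudo_orbit_mono[OF po]] g by blast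
    moreover have "(h1 \<otimes>\<^bsub>G\<^esub> h2) \<otimes>\<^bsub>G\<^esub> g = h1 \<otimes>\<^bsub>G\<^esub> (h2 \<otimes>\<^bsub>G\<^esub> g)"
      using G h1 h2 g by (simp add: group.is_monoid monoid.m_assoc)
    moreover have "\<Phi> (h1 \<otimes>\<^bsub>G\<^esub> h2) = \<Phi> h1 \<circ> \<Phi> h2"
      using act h1 h2 unfolding is_action_def by simp
    ultimately show "(xs ((h1 \<otimes>\<^bsub>G\<^esub> h2) \<otimes>\<^bsub>G\<^esub> g), \<Phi> (h1 \<otimes>\<^bsub>G\<^esub> h2) (xs g)) \<in> D"
      using D1(2) by auto
  qed
qed

lemma pseudo_orbit_change_generators:
  fixes \<Phi> :: "'g \<Rightarrow> 'a::uniform_space \<Rightarrow> 'a"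
  assumes G: "group G" and S: "gen_set G S" and T: "gen_set G T" and act: "is_action G \<Phi>"
    and D: "entourage D"
  obtains D' where "entourage D'"
    "\<And>xs. pseudo_orbit G T \<Phi> D' xs \<Longrightarrow> pseudo_orbit G S \<Phi> D xs"
proof -
  have "\<exists>D'. entourage D' \<and> (\<forall>xs. \<forall>g\<in>carrier G.
          pseudo_orbit G T \<Phi> D' xs \<longrightarrow> (xs (s \<otimes>\<^bsub>G\<^esub> g), \<Phi> s (xs g)) \<in> D)"
    if "s \<in> S" for s
  proof -
    have "s \<in> generate G T" "T \<subseteq> carrier G" "\<And>t. t \<in> T \<Longrightarrow> inv\<^bsub>G\<^esub> t \<in> T"
      using that S T by (auto simp: gen_set_def)
    then show ?thesis
      using pseudo_orbit_generate[OF G _ _ act _ D] by metis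
  qed
  then obtain F where F: "\<And>s. s \<in> S \<Longrightarrow> entourage (F s)"
    "\<And>s xs g. s \<in> S \<Longrightarrow> g \<in> carrier G \<Longrightarrow> pseudo_orbit G T \<Phi> (F s) xs
       \<Longrightarrow> (xs (s \<otimes>\<^bsub>G\<^esub> g), \<Phi> s (xs g)) \<in> D"
    by metis
  have "entourage (\<Inter>s\<in>S. F s)"
    using S F(1) by (simp add: gen_set_def entourage_INT_finite)
  moreover have "pseudo_orbit G S \<Phi> D xs" if "pseudo_orbit G T \<Phi> (\<Inter>s\<in>S. F s) xs" for xs
    unfolding pseudo_orbit_def using F(2) pseudo_orbit_mono[OF that] by blast
  ultimately show thesis
    using that by blast
qed

lemma close_action_iff_pseudo_orbits:
  assumes "group G" "S \<subseteq> carrier G" "is_action G \<Psi>"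
  shows "close_action S \<Phi> \<Psi> D \<longleftrightarrow> (\<forall>x. pseudo_orbit G S \<Phi> D (\<lambda>g. \<Psi> g x))"
proof -
  have "\<Psi> (s \<otimes>\<^bsub>G\<^esub> g) x = \<Psi> s (\<Psi> g x)" if "s \<in> S" "g \<in> carrier G" for s g x
    using assms that unfolding is_action_def by auto
  moreover have "\<Psi> \<one>\<^bsub>G\<^esub> = id" "\<one>\<^bsub>G\<^esub> \<in> carrier G"
    using assms unfolding is_action_def by (auto simp: group.is_monoid monoid.one_closed)
  moreover have "s \<otimes>\<^bsub>G\<^esub> \<one>\<^bsub>G\<^esub> = s" if "s \<in> S" for s
    using assms that by (auto simp: group.is_monoid monoid.r_one)
  ultimately show ?thesis
    unfolding close_action_def pseudo_orbit_def by (metis id_apply)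
qed

lemma close_action_change_generators:
  fixes \<Phi> :: "'g \<Rightarrow> 'a::uniform_space \<Rightarrow> 'a"
  assumes G: "group G" and S: "gen_set G S" and T: "gen_set G T" and act: "is_action G \<Phi>"
    and D: "entourage D"
  obtains D' where "entourage D'"
    "\<And>\<Psi>. is_action G \<Psi> \<Longrightarrow> close_action T \<Phi> \<Psi> D' \<Longrightarrow> close_action S \<Phi> \<Psi> D"
proof -
  obtain D' where "entourage D'" "\<And>xs. pseudo_orbit G T \<Phi> D' xs \<Longrightarrow> pseudo_orbit G S \<Phi> D xs"
    using pseudo_orbit_change_generators[OF G S T act D] by blast
  moreover have "S \<subseteq> carrier G" "T \<subseteq> carrier G"
    using S T by (auto simp: gen_set_def)
  ultimately show thesis
    using that close_action_iff_pseudo_orbits[OF G] by metis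
qed

lemma has_shadowing_change_generators:
  fixes \<Phi> :: "'g \<Rightarrow> 'a::uniform_space \<Rightarrow> 'a"
  assumes "group G" "gen_set G S" "gen_set G T" "is_action G \<Phi>"
    and "has_shadowing G S \<Phi>"
  shows "has_shadowing G T \<Phi>"
  using assms(5) pseudo_orbit_change_generators[OF assms(1-4)] unfolding has_shadowing_def by metis

lemma top_stable_change_generators:
  fixes \<Phi> :: "'g \<Rightarrow> 'a::uniform_space \<Rightarrow> 'a"
  assumes "group G" "gen_set G S" "gen_set G T" "is_action G \<Phi>"
    and "top_stable G S \<Phi>"
  shows "top_stable G T \<Phi>"
  using assms(5) close_action_change_generators[OF assms(1-4)] unfolding top_stable_def by metis

lemma persistent_change_generators:
  fixes \<Phi> :: "'g \<Rightarrow> 'a::uniform_space \<Rightarrow> 'a"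
  assumes "group G" "gen_set G S" "gen_set G T" "is_action G \<Phi>"
    and "persistent G S \<Phi>"
  shows "persistent G T \<Phi>"
  using assms(5) close_action_change_generators[OF assms(1-4)] unfolding persistent_def by metis

lemma mu_shadowing_change_generators:
  fixes \<Phi> :: "'g \<Rightarrow> 'a::uniform_space \<Rightarrow> 'a"
  assumes "group G" "gen_set G S" "gen_set G T" "is_action G \<Phi>"
    and "mu_shadowing G S \<mu> \<Phi>"
  shows "mu_shadowing G T \<mu> \<Phi>"
  using assms(5) pseudo_orbit_change_generators[OF assms(1-4)] unfolding mu_shadowing_def by metis

lemma mu_top_stable_change_generators:
  fixes \<Phi> :: "'g \<Rightarrow> 'a::uniform_space \<Rightarrow> 'a"
  assumes "group G" "gen_set G S" "gen_set G T" "is_action G \<Phi>"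
    and "mu_top_stable G S \<mu> \<Phi>"
  shows "mu_top_stable G T \<mu> \<Phi>"
  using assms(5) close_action_change_generators[OF assms(1-4)] unfolding mu_top_stable_def by metis

lemma mu_persistent_change_generators:
  fixes \<Phi> :: "'g \<Rightarrow> 'a::uniform_space \<Rightarrow> 'a"
  assumes "group G" "gen_set G S" "gen_set G T" "is_action G \<Phi>"
    and "mu_persistent G S \<mu> \<Phi>"
  shows "mu_persistent G T \<mu> \<Phi>"
  using assms(5) close_action_change_generators[OF assms(1-4)] unfolding mu_persistent_def by metis

theorem lemma2p5:
  fixes G :: "('g, 'b) monoid_scheme"
    and S T :: "'g set"
    and \<Phi> :: "'g \<Rightarrow> 'a::uniform_space \<Rightarrow> 'a"
    and \<mu> :: "'a measure"
  assumes "group G"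
    and "gen_set G S" and "gen_set G T" and "S \<noteq> T"
    and "is_action G \<Phi>"
    and "sets \<mu> = sets borel"
  shows "(has_shadowing G S \<Phi> \<longleftrightarrow> has_shadowing G T \<Phi>)
       \<and> (top_stable G S \<Phi> \<longleftrightarrow> top_stable G T \<Phi>)
       \<and> (persistent G S \<Phi> \<longleftrightarrow> persistent G T \<Phi>)
       \<and> (mu_shadowing G S \<mu> \<Phi> \<longleftrightarrow> mu_shadowing G T \<mu> \<Phi>)
       \<and> (mu_top_stable G S \<mu> \<Phi> \<longleftrightarrow> mu_top_stable G T \<mu> \<Phi>)
       \<and> (mu_persistent G S \<mu> \<Phi> \<longleftrightarrow> mu_persistent G T \<mu> \<Phi>)"
  using has_shadowing_change_generators top_stable_change_generators
    persistent_change_generators mu_shadowing_change_generators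
    mu_top_stable_change_generators mu_persistent_change_generators
    assms(1,2,3,5)
  by meson

end
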